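(* In the marked Hawkes model described in the context (with $\kappa<1$), if $X=f(A)\in\mathrm{MDA}(G)$, then the maximal claim size $H$ in one cluster also belongs to $\mathrm{MDA}(G)$.
   Context: $G$ is one of the three extreme value distributions, $\mathbb E=\{y:G(y)>0\}$; a real random variable $X$ belongs to $\mathrm{MDA}(G)$ if there exist $a_n>0,b_n\in\mathbb R$ with $n\,\mathbb P(X>a_nx+b_n)\to-\log G(x)$ for all $x\in\mathbb E$. Marked Hawkes model (cluster representation): $\mathbb S$ is a Polish space, $Q$ a probability on $\mathbb S$, $f:\mathbb S\to\mathbb R_+$ measurable, $\nu>0$, and $h:[0,\infty)\times\mathbb S\to\mathbb R_+$ measurable with $\kappa_a=\int_0^\infty h(s,a)\,ds$ and $\kappa=\mathbb E[\kappa_A]<1$, $A\sim Q$. The immigrants $(\Gamma_i,A_i)$ form a Poisson process on $[0,\infty)\times\mathbb S$ with mean measure $\nu\,ds\times Q$. Each immigrant generates a cluster: it contains the point $(\Gamma_i,A_i)$; recursively, given a point of the cluster at time $s$ with mark $a$, its direct offspring form (conditionally on all previous generations, independently over points) a Poisson process on $[s,\infty)\times\mathbb S$ with mean measure $h(u-s,a)\,du\times Q(db)$; the cluster consists of all points of all generations, and $K+1$ denotes its (a.s. finite) total number of points. All marks are i.i.d. with law $Q$. The maximal claim size in one cluster is $H=\max\{f(b):(u,b)\text{ a point of the cluster}\}$, and $X=f(A)$, $A\sim Q$. *)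

theory Defs
  imports "HOL-Probability.Probability"
begin

definition frechet :: "real \<Rightarrow> real \<Rightarrow> real" where
  "frechet \<alpha> x = (if x > 0 then exp (- (x powr (- \<alpha>))) else 0)"

definition weibull :: "real \<Rightarrow> real \<Rightarrow> real" where
  "weibull \<alpha> x = (if x < 0 then exp (- ((- x) powr \<alpha>)) else 1)"

definition gumbel :: "real \<Rightarrow> real" where
  "gumbel x = exp (- exp (- x))"

definition extreme_value_df :: "(real \<Rightarrow> real) \<Rightarrow> bool" where
  "extreme_value_df G \<longleftrightarrow>
     (\<exists>\<alpha>>0. G = frechet \<alpha>) \<or> (\<exists>\<alpha>>0. G = weibull \<alpha>) \<or> G = gumbel"

text \<open>A random variable with tail function T t = P(X > t) belongs to MDA(G).\<close>
definition in_MDA :: "(real \<Rightarrow> real) \<Rightarrow> (real \<Rightarrow> real) \<Rightarrow> bool" where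
  "in_MDA G T \<longleftrightarrow>
     (\<exists>a b :: nat \<Rightarrow> real. (\<forall>n. a n > 0) \<and>
        (\<forall>x\<in>{y. G y > 0}. (\<lambda>n. real n * T (a n * x + b n)) \<longlonglongrightarrow> - ln (G x)))"

definition hawkes_kappa :: "(real \<Rightarrow> 's \<Rightarrow> real) \<Rightarrow> 's \<Rightarrow> ennreal" where
  "hawkes_kappa h a = (\<integral>\<^sup>+ s. ennreal (h s a) * indicator {0..} s \<partial>lborel)"

definition poisson_prob :: "real \<Rightarrow> nat \<Rightarrow> real" where
  "poisson_prob r k = r ^ k / fact k * exp (- r)"

text \<open>Points of the cluster are labelled by Ulam--Harris words; the root [] is the
  immigrant, v @ [i] is the i-th direct offspring of v, which exists iff i < N v.\<close>
inductive in_cluster :: "(nat list \<Rightarrow> nat) \<Rightarrow> nat list \<Rightarrow> bool" for N where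
  root: "in_cluster N []"
| child: "in_cluster N v \<Longrightarrow> i < N v \<Longrightarrow> in_cluster N (v @ [i])"

definition cluster_max :: "('s \<Rightarrow> real) \<Rightarrow> (nat list \<Rightarrow> 's) \<Rightarrow> (nat list \<Rightarrow> nat) \<Rightarrow> real" where
  "cluster_max f A N = Sup {f (A v) | v. in_cluster N v}"

end

theory Submission
  imports Defs
begin

text \<open>
  Label the points of a cluster by Ulam--Harris words. The pairs \<open>(A v, N v)\<close> are i.i.d., so
  the word \<open>v\<close> belongs to the cluster with probability \<open>\<Prod>k. P(N > v ! k)\<close>, and these
  probabilities sum to \<open>1 / (1 - E N) = E(K + 1) < \<infinity>\<close>. Hence the cluster is a.s. finite,
  \<open>H > t\<close> iff some point \<open>v\<close> of the cluster has \<open>f (A v) > t\<close>, and a union bound gives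
  \<open>P(H > t) \<le> E(K + 1) P(X > t)\<close>. Conversely, the probability that two distinct points both
  exceed \<open>t\<close> sums to \<open>O(P(X > t) (P(X > t) + E[N; f(A) > t])) = o(P(X > t))\<close>, so
  inclusion--exclusion over a finite set of words carrying almost all the weight gives
  \<open>P(H > t) \<ge> (E(K + 1) - e) P(X > t)\<close> once \<open>P(X > t)\<close> is small. Thus
  \<open>P(H > t) \<sim> E(K + 1) P(X > t)\<close>, and such a tail stays in \<open>MDA(G)\<close> because \<open>c (- ln G)\<close> is
  \<open>- ln G\<close> after an affine change of variables.
\<close>

lemma poisson_prob_nonneg: "0 \<le> r \<Longrightarrow> 0 \<le> poisson_prob r k"
  by (simp add: poisson_prob_def)

lemma poisson_prob_sums: "poisson_prob r sums 1"
proof -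
  have "(\<lambda>k. r ^ k /\<^sub>R fact k * exp (- r)) sums (exp r * exp (- r))"
    by (rule sums_mult2[OF exp_converges])
  moreover have "poisson_prob r = (\<lambda>k. r ^ k /\<^sub>R fact k * exp (- r))"
    by (simp add: fun_eq_iff poisson_prob_def divide_inverse)
  ultimately show ?thesis
    by (simp add: exp_minus_inverse)
qed

lemma poisson_prob_le_1: "0 \<le> r \<Longrightarrow> poisson_prob r k \<le> 1"
  using sum_le_suminf[OF sums_summable[OF poisson_prob_sums], of "{k}"]
  by (simp add: poisson_prob_nonneg sums_unique[OF poisson_prob_sums, symmetric])

lemma poisson_prob_mean_sums: "(\<lambda>k. real k * poisson_prob r k) sums r"
proof -
  have "(\<lambda>k. r * (r ^ k /\<^sub>R fact k * exp (- r))) sums (r * (exp r * exp (- r)))"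
    by (rule sums_mult[OF sums_mult2[OF exp_converges]])
  moreover have "r * (r ^ k /\<^sub>R fact k * exp (- r)) = real (Suc k) * poisson_prob r (Suc k)" for k
    by (simp add: poisson_prob_def divide_simps del: of_nat_Suc)
  ultimately have "(\<lambda>k. real (Suc k) * poisson_prob r (Suc k)) sums r"
    by (simp add: exp_minus_inverse)
  then show ?thesis
    by (subst (asm) sums_Suc_iff) simp
qed

lemma emeasure_UN_countable_le:
  assumes "countable I" "\<And>i. i \<in> I \<Longrightarrow> X i \<in> sets M"
  shows "emeasure M (\<Union>i\<in>I. X i) \<le> (\<integral>\<^sup>+i. emeasure M (X i) \<partial>count_space I)"
proof -
  have "indicator (\<Union>i\<in>I. X i) x \<le> (\<integral>\<^sup>+i. indicator (X i) x \<partial>count_space I)" for x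
  proof (cases "x \<in> (\<Union>i\<in>I. X i)")
    case True
    then obtain i0 where i0: "i0 \<in> I" "x \<in> X i0" by auto
    have "(1::ennreal) = (\<integral>\<^sup>+i. indicator (X i) x * indicator {i0} i \<partial>count_space I)"
      using i0 by (subst nn_integral_indicator_singleton) auto
    also have "\<dots> \<le> (\<integral>\<^sup>+i. indicator (X i) x \<partial>count_space I)"
      by (intro nn_integral_mono) (auto simp: indicator_def)
    finally show ?thesis using True by simp
  qed simp
  then have "(\<integral>\<^sup>+x. indicator (\<Union>i\<in>I. X i) x \<partial>M) \<le> (\<integral>\<^sup>+x. \<integral>\<^sup>+i. indicator (X i) x \<partial>count_space I \<partial>M)"
    by (intro nn_integral_mono)
  also have "\<dots> = (\<integral>\<^sup>+i. \<integral>\<^sup>+x. indicator (X i) x \<partial>M \<partial>count_space I)"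
    using assms by (intro nn_integral_count_space_nn_integral) auto
  finally show ?thesis
    using assms by (simp add: sets.countable_UN'' cong: nn_integral_cong_simp)
qed

lemma nn_integral_nat_valued:
  fixes X :: "'a \<Rightarrow> nat"
  assumes X [measurable]: "X \<in> M \<rightarrow>\<^sub>M count_space UNIV"
  shows "(\<integral>\<^sup>+\<omega>. of_nat (X \<omega>) \<partial>M) = (\<integral>\<^sup>+k. of_nat k * emeasure M {\<omega>\<in>space M. X \<omega> = k} \<partial>count_space UNIV)"
proof -
  have "(\<integral>\<^sup>+\<omega>. of_nat (X \<omega>) \<partial>M)
      = (\<integral>\<^sup>+\<omega>. \<integral>\<^sup>+k. of_nat k * indicator {\<omega>'\<in>space M. X \<omega>' = k} \<omega> \<partial>count_space UNIV \<partial>M)"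
  proof (intro nn_integral_cong)
    fix \<omega> assume "\<omega> \<in> space M"
    then have "(\<integral>\<^sup>+k. of_nat k * indicator {\<omega>'\<in>space M. X \<omega>' = k} \<omega> \<partial>count_space UNIV)
        = (\<integral>\<^sup>+k. of_nat k * indicator {X \<omega>} k \<partial>count_space UNIV)"
      by (intro nn_integral_cong) (auto simp: indicator_def)
    then show "of_nat (X \<omega>) = (\<integral>\<^sup>+k. of_nat k * indicator {\<omega>'\<in>space M. X \<omega>' = k} \<omega> \<partial>count_space UNIV)"
      by (simp add: nn_integral_indicator_singleton)
  qed
  also have "\<dots> = (\<integral>\<^sup>+k. of_nat k * emeasure M {\<omega>\<in>space M. X \<omega> = k} \<partial>count_space UNIV)"
    by (subst nn_integral_count_space_nn_integral)
       (auto intro!: nn_integral_cong simp: nn_integral_cmult_indicator simp del: nn_integral_indicator_singleton)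
  finally show ?thesis .
qed

lemma nn_integral_count_space_tail_small:
  fixes F :: "'a::countable \<Rightarrow> ennreal"
  assumes fin: "(\<integral>\<^sup>+x. F x \<partial>count_space UNIV) < \<infinity>" and e: "0 < e"
  shows "\<exists>S. finite S \<and> (\<integral>\<^sup>+x. F x * indicator (- S) x \<partial>count_space UNIV) < e"
proof -
  define S :: "nat \<Rightarrow> 'a set" where "S n = to_nat -` {..<n}" for n
  have finite_S: "finite (S n)" for n
    unfolding S_def by (rule finite_vimageI) auto
  have "(\<integral>\<^sup>+x. (INF n. F x * indicator (- S n) x) \<partial>count_space UNIV)
      = (INF n. \<integral>\<^sup>+x. F x * indicator (- S n) x \<partial>count_space UNIV)"
  proof (rule nn_integral_monotone_convergence_INF_decseq)
    show "decseq (\<lambda>n x. F x * indicator (- S n) x)"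
      by (intro decseq_SucI le_funI) (auto simp: S_def indicator_def)
    show "(\<integral>\<^sup>+x. F x * indicator (- S 0) x \<partial>count_space UNIV) < \<infinity>"
      using fin by (simp add: S_def)
  qed simp
  moreover have "(INF n. F x * indicator (- S n) x) = 0" for x
    by (rule antisym[OF INF_lower2[of "Suc (to_nat x)"]]) (auto simp: S_def)
  ultimately have "(INF n. \<integral>\<^sup>+x. F x * indicator (- S n) x \<partial>count_space UNIV) < e"
    using e by simp
  then show ?thesis
    using finite_S by (auto simp: INF_less_iff)
qed

lemma Sup_real_unbounded:
  assumes "\<not> bdd_above (S::real set)"
  shows "Sup S = Sup (UNIV::real set)"
proof -
  have "(\<forall>x\<in>S. x \<le> z) \<longleftrightarrow> (\<forall>x\<in>UNIV. x \<le> z)" for z :: real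
    using assms by (auto simp: bdd_above_def intro: exI[of _ "z + 1"])
  then show ?thesis
    unfolding Sup_real_def by simp
qed

section \<open>Tail equivalence and maximum domains of attraction\<close>

lemma LIMSEQ_squeeze_multiple:
  fixes x p :: "nat \<Rightarrow> real"
  assumes x: "x \<longlonglongrightarrow> L" and nonneg: "\<And>n. 0 \<le> x n" and upper: "\<And>n. p n \<le> c * x n"
    and lower: "\<And>e. 0 < e \<Longrightarrow> eventually (\<lambda>n. (c - e) * x n \<le> p n) sequentially"
  shows "p \<longlonglongrightarrow> c * L"
proof -
  have L: "0 \<le> L" using x nonneg by (intro LIMSEQ_le_const) auto
  have "(\<lambda>n. p n - c * x n) \<longlonglongrightarrow> 0"
  proof (rule tendstoI)
    fix r :: real assume r: "0 < r"
    define e where "e = r / (L + 2)"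
    have e: "0 < e" using r L by (simp add: e_def)
    have "eventually (\<lambda>n. x n < L + 1) sequentially"
      using x by (intro order_tendstoD(2)) auto
    then show "eventually (\<lambda>n. dist (p n - c * x n) 0 < r) sequentially"
      using lower[OF e]
    proof eventually_elim
      case (elim n)
      have "\<bar>p n - c * x n\<bar> \<le> e * x n" using elim upper[of n] by (simp add: algebra_simps abs_le_iff)
      also have "\<dots> \<le> e * (L + 1)" using elim e by (intro mult_left_mono) auto
      also have "\<dots> < r" unfolding e_def using r L by (simp add: field_simps)
      finally show ?case by simp
    qed
  qed
  then have "(\<lambda>n. (p n - c * x n) + c * x n) \<longlonglongrightarrow> 0 + c * L"
    by (intro tendsto_add tendsto_mult tendsto_const x)
  then show ?thesis by simp
qed

lemma extreme_value_df_max_stable: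
  assumes G: "extreme_value_df G" and c: "0 < c"
  obtains \<alpha> \<beta> where "0 < \<alpha>"
    "\<And>x. 0 < G x \<Longrightarrow> 0 < G (\<alpha> * x + \<beta>) \<and> c * - ln (G (\<alpha> * x + \<beta>)) = - ln (G x)"
  using G unfolding extreme_value_df_def
proof (elim disjE exE conjE)
  fix a assume a: "0 < a" and G_def: "G = frechet a"
  have "(c powr (1 / a) * x) powr (- a) = x powr (- a) / c" if "0 < x" for x
    using a c that by (simp add: powr_mult powr_powr powr_minus_divide)
  then show thesis
    using c by (intro that[of "c powr (1 / a)" 0]) (auto simp: G_def frechet_def split: if_splits)
next
  fix a assume a: "0 < a" and G_def: "G = weibull a"
  have "(c powr (- 1 / a)) powr a = 1 / c"
    using a c by (simp add: powr_powr)
  then have "(- (c powr (- 1 / a) * x)) powr a = (- x) powr a / c" if "x < 0" for x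
    using c that powr_mult[of "c powr (- 1 / a)" "- x" a] by simp
  moreover have "c powr (- 1 / a) * x < 0 \<longleftrightarrow> x < 0" for x
    using c by (simp add: mult_less_0_iff)
  ultimately show thesis
    using c by (intro that[of "c powr (- 1 / a)" 0]) (auto simp: G_def weibull_def)
next
  assume "G = gumbel"
  then show thesis
    using c by (intro that[of 1 "ln c"]) (simp_all add: gumbel_def exp_diff)
qed

lemma in_MDA_tail_equivalent:
  fixes T P :: "real \<Rightarrow> real"
  assumes G: "extreme_value_df G" and T: "in_MDA G T" and c: "0 < c"
    and T_nonneg: "\<And>t. 0 \<le> T t" and upper: "\<And>t. P t \<le> c * T t"
    and lower: "\<And>e. 0 < e \<Longrightarrow> \<exists>\<delta>>0. \<forall>t. T t < \<delta> \<longrightarrow> (c - e) * T t \<le> P t"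
  shows "in_MDA G P"
proof -
  obtain a b :: "nat \<Rightarrow> real" where a: "\<And>n. a n > 0"
    and T_lim: "\<And>x. G x > 0 \<Longrightarrow> (\<lambda>n. real n * T (a n * x + b n)) \<longlonglongrightarrow> - ln (G x)"
    using T unfolding in_MDA_def by auto
  have P_lim: "(\<lambda>n. real n * P (a n * y + b n)) \<longlonglongrightarrow> c * - ln (G y)" if y: "G y > 0" for y
  proof (rule LIMSEQ_squeeze_multiple[OF T_lim[OF y]])
    show "real n * P (a n * y + b n) \<le> c * (real n * T (a n * y + b n))" for n
      using mult_left_mono[OF upper, of "real n"] by (simp add: algebra_simps)
    show "0 \<le> real n * T (a n * y + b n)" for n
      using T_nonneg by simp
    fix e :: real assume "0 < e"
    then obtain \<delta> where \<delta>: "\<delta> > 0" "\<And>t. T t < \<delta> \<Longrightarrow> (c - e) * T t \<le> P t"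
      using lower by blast
    have "(\<lambda>n. real n * T (a n * y + b n) * (1 / real n)) \<longlonglongrightarrow> 0"
      using tendsto_mult[OF T_lim[OF y] lim_1_over_n] by simp
    then have "(\<lambda>n. T (a n * y + b n)) \<longlonglongrightarrow> 0"
      by (rule Lim_transform_eventually) (auto simp: eventually_sequentially intro: exI[of _ 1])
    then have "eventually (\<lambda>n. T (a n * y + b n) < \<delta>) sequentially"
      using \<delta>(1) by (intro order_tendstoD(2)) auto
    then show "eventually (\<lambda>n. (c - e) * (real n * T (a n * y + b n)) \<le> real n * P (a n * y + b n)) sequentially"
    proof eventually_elim
      case (elim n)
      then have "real n * ((c - e) * T (a n * y + b n)) \<le> real n * P (a n * y + b n)"
        by (intro mult_left_mono \<delta>(2)) auto
      then show ?case
        by (simp add: algebra_simps)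
    qed
  qed
  obtain \<alpha> \<beta> where \<alpha>: "0 < \<alpha>"
    and stable: "\<And>x. 0 < G x \<Longrightarrow> 0 < G (\<alpha> * x + \<beta>) \<and> c * - ln (G (\<alpha> * x + \<beta>)) = - ln (G x)"
    using extreme_value_df_max_stable[OF G c] by blast
  have "(\<lambda>n. real n * P (a n * \<alpha> * x + (a n * \<beta> + b n))) \<longlonglongrightarrow> - ln (G x)" if "0 < G x" for x
    using P_lim[of "\<alpha> * x + \<beta>"] stable[OF that] by (simp add: algebra_simps)
  then show ?thesis
    unfolding in_MDA_def using a \<alpha>
    by (intro exI[of _ "\<lambda>n. a n * \<alpha>"] exI[of _ "\<lambda>n. a n * \<beta> + b n"]) auto
qed

section \<open>Ulam--Harris words\<close>

definition ancestors :: "'a list \<Rightarrow> 'a list set" where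
  "ancestors w = (\<lambda>k. take k w) ` {..<length w}"

definition descendants :: "'a list \<Rightarrow> 'a list set" where
  "descendants v = {w. \<exists>i u. w = v @ i # u}"

definition word_weight :: "(nat \<Rightarrow> real) \<Rightarrow> nat list \<Rightarrow> real" where
  "word_weight g v = (\<Prod>k<length v. g (v ! k))"

lemma finite_ancestors [simp]: "finite (ancestors w)"
  by (simp add: ancestors_def)

lemma inj_on_take: "inj_on (\<lambda>k. take k w) {..<length w}"
  by (rule inj_onI) (metis length_take lessThan_iff min.absorb4)

lemma prod_ancestors: "(\<Prod>j\<in>ancestors w. F j) = (\<Prod>k<length w. F (take k w))"
  unfolding ancestors_def by (rule prod.reindex[OF inj_on_take, unfolded comp_def])

lemma not_in_ancestors [simp]: "w \<notin> ancestors w"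
proof
  assume "w \<in> ancestors w"
  then obtain k where "k < length w" "w = take k w"
    by (auto simp: ancestors_def)
  then show False
    by (metis length_take min.absorb4 less_irrefl)
qed

lemma in_ancestors_iff: "j \<in> ancestors w \<longleftrightarrow> length j < length w \<and> take (length j) w = j"
  by (auto simp: ancestors_def) (metis lessThan_iff image_eqI)

lemma ancestor_decomp: "j \<in> ancestors w \<Longrightarrow> w = j @ (w ! length j) # drop (Suc (length j)) w"
  by (metis Cons_nth_drop_Suc append_take_drop_id in_ancestors_iff)

lemma ancestors_append_Cons:
  "v \<in> ancestors (v @ i # u)" "j \<in> ancestors u \<Longrightarrow> v @ i # j \<in> ancestors (v @ i # u)"
  by (auto simp: in_ancestors_iff)

lemma in_cluster_snoc: "in_cluster N (v @ [i]) \<longleftrightarrow> in_cluster N v \<and> i < N v"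
  by (auto elim: in_cluster.cases intro: in_cluster.child)

lemma in_cluster_iff_nth: "in_cluster N w \<longleftrightarrow> (\<forall>k<length w. w ! k < N (take k w))"
proof (induction w rule: rev_induct)
  case Nil
  then show ?case by (simp add: in_cluster.root)
next
  case (snoc i v)
  then show ?case by (auto simp: in_cluster_snoc nth_append less_Suc_eq)
qed

lemma in_cluster_iff_ancestors: "in_cluster N w \<longleftrightarrow> (\<forall>j\<in>ancestors w. w ! length j < N j)"
  unfolding in_cluster_iff_nth ancestors_def by auto

lemma word_weight_Nil [simp]: "word_weight g [] = 1"
  by (simp add: word_weight_def)

lemma word_weight_Cons: "word_weight g (i # u) = g i * word_weight g u"
  by (simp add: word_weight_def prod.lessThan_Suc_shift del: prod.lessThan_Suc)

lemma word_weight_nonneg: "(\<And>i. 0 \<le> g i) \<Longrightarrow> 0 \<le> word_weight g v"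
  by (simp add: word_weight_def prod_nonneg)

lemma nn_integral_descendants:
  fixes F :: "'a list \<Rightarrow> ennreal"
  shows "(\<integral>\<^sup>+w. F w * indicator (descendants v) w \<partial>count_space UNIV)
       = (\<integral>\<^sup>+i. \<integral>\<^sup>+u. F (v @ i # u) \<partial>count_space UNIV \<partial>count_space UNIV)"
proof -
  have bij: "bij_betw (\<lambda>p. v @ fst p # snd p) UNIV (descendants v)"
    by (auto simp: bij_betw_def inj_on_def descendants_def image_def)
  have "(\<integral>\<^sup>+w. F w * indicator (descendants v) w \<partial>count_space UNIV)
      = (\<integral>\<^sup>+w. F w \<partial>count_space (descendants v))"
    by (simp add: nn_integral_count_space_indicator)
  also have "\<dots> = (\<integral>\<^sup>+p. F (v @ fst p # snd p) \<partial>count_space UNIV)"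
    by (rule nn_integral_bij_count_space[OF bij, symmetric])
  also have "\<dots> = (\<integral>\<^sup>+i. \<integral>\<^sup>+u. F (v @ i # u) \<partial>count_space UNIV \<partial>count_space UNIV)"
    using nn_integral_fst_count_space[of "\<lambda>p. F (v @ fst p # snd p)"] by simp
  finally show ?thesis .
qed

lemma nn_integral_lists_split:
  fixes F :: "'a list \<Rightarrow> ennreal"
  shows "(\<integral>\<^sup>+w. F w \<partial>count_space UNIV)
       = F [] + (\<integral>\<^sup>+i. \<integral>\<^sup>+u. F (i # u) \<partial>count_space UNIV \<partial>count_space UNIV)"
proof -
  have "F w = F w * indicator {[]} w + F w * indicator (descendants []) w" for w
    by (cases w) (auto simp: descendants_def)
  then have "(\<integral>\<^sup>+w. F w \<partial>count_space UNIV)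
      = (\<integral>\<^sup>+w. F w * indicator {[]} w \<partial>count_space UNIV)
        + (\<integral>\<^sup>+w. F w * indicator (descendants []) w \<partial>count_space UNIV)"
    by (subst nn_integral_add[symmetric]) auto
  then show ?thesis
    by (simp add: nn_integral_descendants nn_integral_indicator_singleton)
qed

lemma nn_integral_word_weight_length:
  assumes "\<And>i. 0 \<le> g i" "summable g"
  shows "(\<integral>\<^sup>+v. ennreal (word_weight g v) * indicator {v. length v = n} v \<partial>count_space UNIV)
       = ennreal (suminf g ^ n)"
proof (induction n)
  case 0
  have "{v::nat list. length v = 0} = {[]}" by auto
  then show ?case by (simp add: nn_integral_indicator_singleton)
next
  case (Suc n)
  have "(\<integral>\<^sup>+v. ennreal (word_weight g v) * indicator {v. length v = Suc n} v \<partial>count_space UNIV)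
      = (\<integral>\<^sup>+i. ennreal (g i) * ennreal (suminf g ^ n) \<partial>count_space UNIV)"
    using assms(1)
    by (subst nn_integral_lists_split)
       (simp add: word_weight_Cons ennreal_mult' mult.assoc nn_integral_cmult indicator_def flip: Suc)
  also have "\<dots> = ennreal (suminf g) * ennreal (suminf g ^ n)"
    using assms by (simp add: nn_integral_multc nn_integral_count_space_nat suminf_ennreal2)
  finally show ?case
    using assms by (simp add: ennreal_mult suminf_nonneg)
qed

lemma nn_integral_word_weight:
  assumes nonneg: "\<And>i. 0 \<le> g i" and g: "summable g" "suminf g < 1"
  shows "(\<integral>\<^sup>+v. ennreal (word_weight g v) \<partial>count_space UNIV) = ennreal (1 / (1 - suminf g))"
proof -
  have m: "0 \<le> suminf g" using nonneg g by (simp add: suminf_nonneg)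
  have "(\<integral>\<^sup>+v. ennreal (word_weight g v) \<partial>count_space UNIV)
      = (\<integral>\<^sup>+v. (\<Sum>n. ennreal (word_weight g v) * indicator {v. length v = n} v) \<partial>count_space UNIV)"
  proof (intro nn_integral_cong)
    fix v :: "nat list"
    show "ennreal (word_weight g v) = (\<Sum>n. ennreal (word_weight g v) * indicator {v. length v = n} v)"
      by (subst suminf_finite[of "{length v}"]) auto
  qed
  also have "\<dots> = (\<Sum>n. ennreal (suminf g ^ n))"
    by (subst nn_integral_suminf) (auto simp: nn_integral_word_weight_length[OF nonneg g(1)])
  also have "\<dots> = ennreal (1 / (1 - suminf g))"
    using m g(2) by (intro suminf_ennreal_eq geometric_sums) auto
  finally show ?thesis .
qed

section \<open>The cluster of a marked Hawkes process\<close>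

locale hawkes_cluster =
  fixes Q :: "'s measure" and f :: "'s \<Rightarrow> real" and h :: "real \<Rightarrow> 's \<Rightarrow> real"
    and M :: "'w measure" and A :: "nat list \<Rightarrow> 'w \<Rightarrow> 's" and N :: "nat list \<Rightarrow> 'w \<Rightarrow> nat"
  assumes Q_prob: "prob_space Q"
    and f_measurable [measurable]: "f \<in> borel_measurable Q"
    and h_measurable: "(\<lambda>(s, a). h s a) \<in> borel_measurable (borel \<Otimes>\<^sub>M Q)"
    and kappa_lt_1: "(\<integral>\<^sup>+ a. hawkes_kappa h a \<partial>Q) < 1"
    and M_prob: "prob_space M"
    and indep: "prob_space.indep_vars M (\<lambda>_. Q \<Otimes>\<^sub>M count_space UNIV)
                  (\<lambda>v \<omega>. (A v \<omega>, N v \<omega>)) UNIV"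
    and law: "\<And>v B k. B \<in> sets Q \<Longrightarrow>
                measure M {\<omega> \<in> space M. A v \<omega> \<in> B \<and> N v \<omega> = k}
                = (\<integral>a\<in>B. poisson_prob (enn2real (hawkes_kappa h a)) k \<partial>Q)"
begin

sublocale prob_space M
  by (rule M_prob)

interpretation Q: prob_space Q
  by (rule Q_prob)

definition kappa :: "'s \<Rightarrow> real" where
  "kappa a = enn2real (hawkes_kappa h a)"

definition mark_offspring_law :: "'s set \<Rightarrow> nat \<Rightarrow> real" where
  "mark_offspring_law B k = (\<integral>a\<in>B. poisson_prob (kappa a) k \<partial>Q)"

lemma kappa_nonneg: "0 \<le> kappa a"
  by (simp add: kappa_def)

lemma mark_offspring_measurable: "(\<lambda>\<omega>. (A v \<omega>, N v \<omega>)) \<in> M \<rightarrow>\<^sub>M Q \<Otimes>\<^sub>M count_space UNIV"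
  using indep unfolding indep_vars_def by auto

lemma A_measurable [measurable]: "A v \<in> M \<rightarrow>\<^sub>M Q"
  using measurable_compose[OF mark_offspring_measurable measurable_fst] by simp

lemma N_measurable [measurable]: "N v \<in> M \<rightarrow>\<^sub>M count_space UNIV"
  using measurable_compose[OF mark_offspring_measurable measurable_snd] by simp

lemma hawkes_kappa_measurable [measurable]: "hawkes_kappa h \<in> borel_measurable Q"
proof -
  have "(\<lambda>x. (snd x, fst x)) \<in> Q \<Otimes>\<^sub>M lborel \<rightarrow>\<^sub>M borel \<Otimes>\<^sub>M Q"
    by measurable
  from measurable_compose[OF this h_measurable]
  have "(\<lambda>x. h (snd x) (fst x)) \<in> borel_measurable (Q \<Otimes>\<^sub>M lborel)"
    by (simp add: case_prod_beta')
  then have "(\<lambda>x. ennreal (h (snd x) (fst x)) * indicator {0..} (snd x)) \<in> borel_measurable (Q \<Otimes>\<^sub>M lborel)"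
    by measurable
  from lborel.borel_measurable_nn_integral_fst[OF this] show ?thesis
    unfolding hawkes_kappa_def by simp
qed

lemma kappa_measurable [measurable]: "kappa \<in> borel_measurable Q"
  unfolding kappa_def by measurable

lemma poisson_prob_kappa_measurable [measurable]: "(\<lambda>a. poisson_prob (kappa a) k) \<in> borel_measurable Q"
  unfolding poisson_prob_def by measurable

lemma mark_offspring_law_ennreal:
  assumes B: "B \<in> sets Q"
  shows "ennreal (mark_offspring_law B k) = (\<integral>\<^sup>+a. indicator B a * ennreal (poisson_prob (kappa a) k) \<partial>Q)"
proof -
  have "integrable Q (\<lambda>a. indicator B a *\<^sub>R poisson_prob (kappa a) k)"
    using B poisson_prob_le_1[OF kappa_nonneg] poisson_prob_nonneg[OF kappa_nonneg]
    by (intro Q.integrable_const_bound[where B=1]) (auto simp: indicator_def)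
  then have "(\<integral>\<^sup>+a. ennreal (indicator B a *\<^sub>R poisson_prob (kappa a) k) \<partial>Q) = ennreal (mark_offspring_law B k)"
    unfolding mark_offspring_law_def set_lebesgue_integral_def
    by (rule nn_integral_eq_integral) (auto simp: poisson_prob_nonneg kappa_nonneg)
  then show ?thesis
    by (simp add: indicator_mult_ennreal mult.commute)
qed

lemma emeasure_mark_offspring:
  assumes B: "B \<in> sets Q"
  shows "emeasure M {\<omega>\<in>space M. A v \<omega> \<in> B \<and> N v \<omega> \<in> K}
       = (\<integral>\<^sup>+k. ennreal (mark_offspring_law B k) \<partial>count_space K)"
proof -
  have "{\<omega>\<in>space M. A v \<omega> \<in> B \<and> N v \<omega> \<in> K} = (\<Union>k\<in>K. {\<omega>\<in>space M. A v \<omega> \<in> B \<and> N v \<omega> = k})"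
    by auto
  also have "emeasure M \<dots> = (\<integral>\<^sup>+k. emeasure M {\<omega>\<in>space M. A v \<omega> \<in> B \<and> N v \<omega> = k} \<partial>count_space K)"
    using B by (intro emeasure_UN_countable) (auto simp: disjoint_family_on_def)
  also have "\<dots> = (\<integral>\<^sup>+k. ennreal (mark_offspring_law B k) \<partial>count_space K)"
    using B by (intro nn_integral_cong) (simp add: emeasure_eq_measure law mark_offspring_law_def kappa_def)
  finally show ?thesis .
qed

lemma nn_integral_mark_offspring_law:
  assumes B [measurable]: "B \<in> sets Q"
  shows "(\<integral>\<^sup>+k. ennreal (mark_offspring_law B k) \<partial>count_space UNIV) = emeasure Q B"
proof -
  have "(\<integral>\<^sup>+k. ennreal (mark_offspring_law B k) \<partial>count_space UNIV)
      = (\<Sum>k. \<integral>\<^sup>+a. indicator B a * ennreal (poisson_prob (kappa a) k) \<partial>Q)"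
    by (simp add: nn_integral_count_space_nat mark_offspring_law_ennreal)
  also have "\<dots> = (\<integral>\<^sup>+a. (\<Sum>k. indicator B a * ennreal (poisson_prob (kappa a) k)) \<partial>Q)"
    by (rule nn_integral_suminf[symmetric]) measurable
  also have "\<dots> = (\<integral>\<^sup>+a. indicator B a \<partial>Q)"
    using suminf_ennreal_eq[OF poisson_prob_nonneg[OF kappa_nonneg] poisson_prob_sums]
    by (intro nn_integral_cong) simp
  finally show ?thesis
    by simp
qed

lemma emeasure_mark:
  "B \<in> sets Q \<Longrightarrow> emeasure M {\<omega>\<in>space M. A v \<omega> \<in> B} = emeasure Q B"
  using emeasure_mark_offspring[of B v UNIV] nn_integral_mark_offspring_law[of B] by simp

lemma emeasure_mark_offspring_eq_root:
  "B \<in> sets Q \<Longrightarrow> emeasure M {\<omega>\<in>space M. (A v \<omega>, N v \<omega>) \<in> B \<times> K}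
     = emeasure M {\<omega>\<in>space M. (A [] \<omega>, N [] \<omega>) \<in> B \<times> K}"
  using emeasure_mark_offspring[of B v K] emeasure_mark_offspring[of B "[]" K] by simp

lemma mean_offspring_lt_1: "(\<integral>\<^sup>+\<omega>. of_nat (N v \<omega>) \<partial>M) < 1"
proof -
  have "(\<integral>\<^sup>+\<omega>. of_nat (N v \<omega>) \<partial>M) = (\<integral>\<^sup>+k. of_nat k * emeasure M {\<omega>\<in>space M. N v \<omega> = k} \<partial>count_space UNIV)"
    by (rule nn_integral_nat_valued) measurable
  also have "\<dots> = (\<integral>\<^sup>+k. of_nat k * ennreal (mark_offspring_law (space Q) k) \<partial>count_space UNIV)"
  proof (intro nn_integral_cong)
    fix k
    have "{\<omega>\<in>space M. N v \<omega> = k} = {\<omega>\<in>space M. A v \<omega> \<in> space Q \<and> N v \<omega> = k}"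
      by (auto simp: measurable_space[OF A_measurable])
    then show "of_nat k * emeasure M {\<omega>\<in>space M. N v \<omega> = k} = of_nat k * ennreal (mark_offspring_law (space Q) k)"
      using emeasure_mark_offspring[of "space Q" v "{k}"] by (simp add: nn_integral_count_space_finite)
  qed
  also have "\<dots> = (\<Sum>k. \<integral>\<^sup>+a. of_nat k * ennreal (poisson_prob (kappa a) k) \<partial>Q)"
    using mark_offspring_law_ennreal[of "space Q"]
    by (simp add: nn_integral_count_space_nat nn_integral_cmult cong: nn_integral_cong_simp)
  also have "\<dots> = (\<integral>\<^sup>+a. (\<Sum>k. of_nat k * ennreal (poisson_prob (kappa a) k)) \<partial>Q)"
    by (rule nn_integral_suminf[symmetric]) measurable
  also have "\<dots> = (\<integral>\<^sup>+a. ennreal (kappa a) \<partial>Q)"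
    using poisson_prob_mean_sums
    by (intro nn_integral_cong)
       (simp add: ennreal_of_nat_eq_real_of_nat suminf_ennreal_eq poisson_prob_nonneg kappa_nonneg
             flip: ennreal_mult')
  also have "\<dots> \<le> (\<integral>\<^sup>+a. hawkes_kappa h a \<partial>Q)"
    by (intro nn_integral_mono) (simp add: kappa_def ennreal_enn2real_if)
  also have "\<dots> < 1"
    by (rule kappa_lt_1)
  finally show ?thesis .
qed

lemma emeasure_pairs_indep:
  assumes J: "finite J" and B: "\<And>j. j \<in> J \<Longrightarrow> B j \<in> sets (Q \<Otimes>\<^sub>M count_space UNIV)"
  shows "emeasure M {\<omega>\<in>space M. \<forall>j\<in>J. (A j \<omega>, N j \<omega>) \<in> B j}
       = (\<Prod>j\<in>J. emeasure M {\<omega>\<in>space M. (A j \<omega>, N j \<omega>) \<in> B j})"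
proof (cases "J = {}")
  case False
  have event: "{\<omega>\<in>space M. (A j \<omega>, N j \<omega>) \<in> B j} = (\<lambda>\<omega>. (A j \<omega>, N j \<omega>)) -` B j \<inter> space M" for j
    by auto
  have "prob (\<Inter>j\<in>J. (\<lambda>\<omega>. (A j \<omega>, N j \<omega>)) -` B j \<inter> space M)
      = (\<Prod>j\<in>J. prob ((\<lambda>\<omega>. (A j \<omega>, N j \<omega>)) -` B j \<inter> space M))"
    by (rule indep_varsD[OF indep False J]) (auto simp: B)
  moreover have "{\<omega>\<in>space M. \<forall>j\<in>J. (A j \<omega>, N j \<omega>) \<in> B j}
      = (\<Inter>j\<in>J. (\<lambda>\<omega>. (A j \<omega>, N j \<omega>)) -` B j \<inter> space M)"
    using False by auto
  ultimately show ?thesis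
    by (simp add: emeasure_eq_measure prod_ennreal event)
qed (simp add: emeasure_space_1)

lemma pairs_event_sets:
  assumes J: "finite J" and B: "\<And>j. j \<in> J \<Longrightarrow> B j \<in> sets (Q \<Otimes>\<^sub>M count_space UNIV)"
  shows "{\<omega>\<in>space M. \<forall>j\<in>J. (A j \<omega>, N j \<omega>) \<in> B j} \<in> sets M"
proof -
  have "{\<omega>\<in>space M. (A j \<omega>, N j \<omega>) \<in> B j} \<in> sets M" if "j \<in> J" for j
    using measurable_sets[OF mark_offspring_measurable B[OF that]]
    by (simp add: vimage_def Int_def conj_commute)
  then show ?thesis
    using J by (intro sets.sets_Collect_finite_All) auto
qed

definition offspring_tail :: "nat \<Rightarrow> real" where
  "offspring_tail i = prob {\<omega>\<in>space M. i < N [] \<omega>}"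

definition mark_tail :: "real \<Rightarrow> real" where
  "mark_tail t = Q.prob {a\<in>space Q. t < f a}"

definition joint_tail :: "real \<Rightarrow> nat \<Rightarrow> real" where
  "joint_tail t i = prob {\<omega>\<in>space M. t < f (A [] \<omega>) \<and> i < N [] \<omega>}"

definition offspring_mean :: real where
  "offspring_mean = (\<Sum>i. offspring_tail i)"

text \<open>The expected number \<open>E(K + 1)\<close> of points of a cluster, see
  \<open>nn_integral_word_weight_offspring_tail\<close>.\<close>
definition mean_cluster_size :: real where
  "mean_cluster_size = 1 / (1 - offspring_mean)"

definition exceedance :: "real \<Rightarrow> nat list \<Rightarrow> 'w set" where
  "exceedance t v = {\<omega>\<in>space M. in_cluster (\<lambda>u. N u \<omega>) v \<and> t < f (A v \<omega>)}"

lemma offspring_tail_nonneg: "0 \<le> offspring_tail i"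
  by (simp add: offspring_tail_def)

lemma mark_tail_nonneg: "0 \<le> mark_tail t"
  by (simp add: mark_tail_def)

lemma joint_tail_nonneg: "0 \<le> joint_tail t i"
  by (simp add: joint_tail_def)

lemma joint_tail_le_offspring_tail: "joint_tail t i \<le> offspring_tail i"
  unfolding joint_tail_def offspring_tail_def by (intro finite_measure_mono) auto

lemma mark_tail_sets [measurable]: "{a\<in>space Q. t < f a} \<in> sets Q"
  by measurable

lemma in_cluster_measurable [measurable]: "Measurable.pred M (\<lambda>\<omega>. in_cluster (\<lambda>u. N u \<omega>) v)"
  unfolding in_cluster_iff_nth by measurable

lemma exceedance_sets [measurable]: "exceedance t v \<in> sets M"
  unfolding exceedance_def by measurable

text \<open>The next three lemmas are stated in the simp normal form of the events
  \<open>(A v \<omega>, N v \<omega>) \<in> B \<times> K\<close> that come out of \<open>emeasure_pairs_indep\<close>.\<close>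
lemma emeasure_offspring_tail:
  "emeasure M {\<omega>\<in>space M. A v \<omega> \<in> space Q \<and> i < N v \<omega>} = offspring_tail i"
proof -
  have "{\<omega>\<in>space M. A [] \<omega> \<in> space Q \<and> i < N [] \<omega>} = {\<omega>\<in>space M. i < N [] \<omega>}"
    by (auto simp: measurable_space[OF A_measurable])
  then show ?thesis
    using emeasure_mark_offspring_eq_root[of "space Q" v "{n. i < n}"]
    by (simp add: offspring_tail_def emeasure_eq_measure)
qed

lemma emeasure_mark_tail:
  "emeasure M {\<omega>\<in>space M. A v \<omega> \<in> space Q \<and> t < f (A v \<omega>)} = mark_tail t"
  using emeasure_mark[OF mark_tail_sets, of v]
  by (simp add: mark_tail_def Q.emeasure_eq_measure)

lemma emeasure_joint_tail:
  "emeasure M {\<omega>\<in>space M. A v \<omega> \<in> space Q \<and> t < f (A v \<omega>) \<and> i < N v \<omega>} = joint_tail t i"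
proof -
  have "{\<omega>\<in>space M. A [] \<omega> \<in> space Q \<and> t < f (A [] \<omega>) \<and> i < N [] \<omega>}
      = {\<omega>\<in>space M. t < f (A [] \<omega>) \<and> i < N [] \<omega>}"
    by (auto simp: measurable_space[OF A_measurable])
  then show ?thesis
    using emeasure_mark_offspring_eq_root[of "{a\<in>space Q. t < f a}" v "{n. i < n}"]
    by (simp add: joint_tail_def emeasure_eq_measure)
qed

lemma prod_ancestors_offspring_tail:
  "(\<Prod>j\<in>ancestors w. ennreal (offspring_tail (w ! length j))) = ennreal (word_weight offspring_tail w)"
  by (simp add: prod_ancestors word_weight_def prod_ennreal offspring_tail_nonneg)

lemma emeasure_in_cluster_mark:
  assumes B: "B \<in> sets Q"
  shows "emeasure M {\<omega>\<in>space M. in_cluster (\<lambda>u. N u \<omega>) v \<and> A v \<omega> \<in> B}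
       = ennreal (word_weight offspring_tail v) * emeasure Q B"
proof -
  define C where "C j = (if j = v then B \<times> UNIV else space Q \<times> {n. v ! length j < n})" for j
  have C: "C j \<in> sets (Q \<Otimes>\<^sub>M count_space UNIV)" for j
    using B by (simp add: C_def)
  have C_ancestor: "C j = space Q \<times> {n. v ! length j < n}" if "j \<in> ancestors v" for j
    using that by (auto simp: C_def)
  have "{\<omega>\<in>space M. in_cluster (\<lambda>u. N u \<omega>) v \<and> A v \<omega> \<in> B}
      = {\<omega>\<in>space M. \<forall>j\<in>insert v (ancestors v). (A j \<omega>, N j \<omega>) \<in> C j}"
    by (auto simp: C_ancestor in_cluster_iff_ancestors measurable_space[OF A_measurable]) (simp_all add: C_def)
  also have "emeasure M \<dots> = (\<Prod>j\<in>insert v (ancestors v). emeasure M {\<omega>\<in>space M. (A j \<omega>, N j \<omega>) \<in> C j})"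
    by (rule emeasure_pairs_indep) (auto simp: C)
  also have "\<dots> = emeasure M {\<omega>\<in>space M. (A v \<omega>, N v \<omega>) \<in> C v}
      * (\<Prod>j\<in>ancestors v. emeasure M {\<omega>\<in>space M. (A j \<omega>, N j \<omega>) \<in> C j})"
    by simp
  also have "emeasure M {\<omega>\<in>space M. (A v \<omega>, N v \<omega>) \<in> C v} = emeasure Q B"
    using emeasure_mark[OF B] by (simp add: C_def)
  also have "(\<Prod>j\<in>ancestors v. emeasure M {\<omega>\<in>space M. (A j \<omega>, N j \<omega>) \<in> C j})
      = (\<Prod>j\<in>ancestors v. ennreal (offspring_tail (v ! length j)))"
    by (intro prod.cong refl) (simp add: C_ancestor emeasure_offspring_tail)
  finally show ?thesis
    by (simp add: prod_ancestors_offspring_tail mult.commute)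
qed

lemma emeasure_in_cluster:
  "emeasure M {\<omega>\<in>space M. in_cluster (\<lambda>u. N u \<omega>) v} = ennreal (word_weight offspring_tail v)"
proof -
  have "{\<omega>\<in>space M. in_cluster (\<lambda>u. N u \<omega>) v} = {\<omega>\<in>space M. in_cluster (\<lambda>u. N u \<omega>) v \<and> A v \<omega> \<in> space Q}"
    by (auto simp: measurable_space[OF A_measurable])
  then show ?thesis
    using emeasure_in_cluster_mark[of "space Q" v] by (simp add: Q.emeasure_space_1)
qed

lemma emeasure_exceedance: "emeasure M (exceedance t v) = ennreal (word_weight offspring_tail v * mark_tail t)"
proof -
  have "exceedance t v = {\<omega>\<in>space M. in_cluster (\<lambda>u. N u \<omega>) v \<and> A v \<omega> \<in> {a\<in>space Q. t < f a}}"
    by (auto simp: exceedance_def measurable_space[OF A_measurable])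
  then show ?thesis
    using emeasure_in_cluster_mark[of "{a\<in>space Q. t < f a}" v]
    by (simp add: mark_tail_def Q.emeasure_eq_measure ennreal_mult word_weight_nonneg offspring_tail_nonneg)
qed

lemma offspring_tail_summable: "summable offspring_tail"
  and offspring_mean_lt_1: "offspring_mean < 1"
proof -
  have "(\<Sum>i. ennreal (offspring_tail i)) = (\<integral>\<^sup>+\<omega>. of_nat (N [] \<omega>) \<partial>M)"
    by (simp add: nn_integral_nat_function offspring_tail_def emeasure_eq_measure)
  then have mean: "(\<Sum>i. ennreal (offspring_tail i)) < 1"
    using mean_offspring_lt_1 by simp
  then show summable: "summable offspring_tail"
    by (intro summable_suminf_not_top) (auto simp: offspring_tail_nonneg)
  show "offspring_mean < 1"
    using mean unfolding offspring_mean_def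
    by (simp add: suminf_ennreal2[OF offspring_tail_nonneg summable] ennreal_less_iff[symmetric] del: ennreal_1)
qed

lemma offspring_mean_nonneg: "0 \<le> offspring_mean"
  unfolding offspring_mean_def by (rule suminf_nonneg[OF offspring_tail_summable offspring_tail_nonneg])

lemma mean_cluster_size_ge_1: "1 \<le> mean_cluster_size"
  using offspring_mean_nonneg offspring_mean_lt_1 by (simp add: mean_cluster_size_def)

lemma nn_integral_word_weight_offspring_tail:
  "(\<integral>\<^sup>+v. ennreal (word_weight offspring_tail v) \<partial>count_space UNIV) = ennreal mean_cluster_size"
  unfolding mean_cluster_size_def offspring_mean_def
  using offspring_tail_nonneg offspring_tail_summable offspring_mean_lt_1
  by (intro nn_integral_word_weight) (auto simp: offspring_mean_def)

lemma AE_finite_cluster: "AE \<omega> in M. finite {v. in_cluster (\<lambda>u. N u \<omega>) v}"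
proof -
  define size where
    "size \<omega> = (\<integral>\<^sup>+v. indicator {\<omega>\<in>space M. in_cluster (\<lambda>u. N u \<omega>) v} \<omega> \<partial>count_space UNIV)" for \<omega>
  have "(\<lambda>(\<omega>, v). indicator {\<omega>\<in>space M. in_cluster (\<lambda>u. N u \<omega>) v} \<omega> :: ennreal)
      \<in> borel_measurable (M \<Otimes>\<^sub>M count_space UNIV)"
    unfolding measurable_pair_swap_iff[of _ M]
    by (rule measurable_pair_measure_countable1) (auto intro!: borel_measurable_indicator)
  then have size_measurable: "size \<in> borel_measurable M"
    unfolding size_def
    by (intro sigma_finite_measure.borel_measurable_nn_integral sigma_finite_measure_count_space_countable) auto
  have "(\<integral>\<^sup>+\<omega>. size \<omega> \<partial>M)
      = (\<integral>\<^sup>+v. emeasure M {\<omega>\<in>space M. in_cluster (\<lambda>u. N u \<omega>) v} \<partial>count_space UNIV)"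
    unfolding size_def by (subst nn_integral_count_space_nn_integral) auto
  also have "\<dots> = ennreal mean_cluster_size"
    by (simp add: emeasure_in_cluster nn_integral_word_weight_offspring_tail)
  finally have "(\<integral>\<^sup>+\<omega>. size \<omega> \<partial>M) \<noteq> \<infinity>"
    by simp
  from nn_integral_PInf_AE[OF size_measurable this] show ?thesis
  proof (rule AE_mp, intro AE_I2 impI)
    fix \<omega> assume "\<omega> \<in> space M" "size \<omega> \<noteq> \<infinity>"
    then have "(\<integral>\<^sup>+v. indicator {v. in_cluster (\<lambda>u. N u \<omega>) v} v \<partial>count_space UNIV) \<noteq> \<infinity>"
      unfolding size_def by (simp add: indicator_def)
    then show "finite {v. in_cluster (\<lambda>u. N u \<omega>) v}"
      by (auto simp: emeasure_count_space split: if_splits)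
  qed
qed

definition max_exceedance :: "real \<Rightarrow> 'w set" where
  "max_exceedance t = {\<omega>\<in>space M. t < cluster_max f (\<lambda>v. A v \<omega>) (\<lambda>v. N v \<omega>)}"

definition marks_bounded :: "'w \<Rightarrow> bool" where
  "marks_bounded \<omega> \<longleftrightarrow> (\<exists>m::nat. \<forall>v. in_cluster (\<lambda>u. N u \<omega>) v \<longrightarrow> f (A v \<omega>) \<le> real m)"

lemma marks_bounded_measurable [measurable]: "Measurable.pred M marks_bounded"
  unfolding marks_bounded_def by measurable

lemma bdd_above_cluster_marks_iff:
  "bdd_above {f (A v \<omega>) |v. in_cluster (\<lambda>u. N u \<omega>) v} \<longleftrightarrow> marks_bounded \<omega>"
proof
  assume "bdd_above {f (A v \<omega>) |v. in_cluster (\<lambda>u. N u \<omega>) v}"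
  then obtain b where "\<forall>v. in_cluster (\<lambda>u. N u \<omega>) v \<longrightarrow> f (A v \<omega>) \<le> b"
    by (auto simp: bdd_above_def)
  then show "marks_bounded \<omega>"
    unfolding marks_bounded_def by (metis real_nat_ceiling_ge order.trans)
qed (auto simp: marks_bounded_def intro: bdd_aboveI)

text \<open>On an unbounded cluster, \<open>cluster_max\<close> is the junk value \<open>Sup UNIV\<close>; this case split
  is what makes the event \<open>H > t\<close> measurable.\<close>
lemma less_cluster_max_iff:
  "t < cluster_max f (\<lambda>v. A v \<omega>) (\<lambda>v. N v \<omega>) \<longleftrightarrow>
     (marks_bounded \<omega> \<and> (\<exists>v. in_cluster (\<lambda>u. N u \<omega>) v \<and> t < f (A v \<omega>)))
     \<or> (\<not> marks_bounded \<omega> \<and> t < Sup (UNIV :: real set))"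
proof -
  define S where "S = {f (A v \<omega>) |v. in_cluster (\<lambda>u. N u \<omega>) v}"
  have "S \<noteq> {}"
    unfolding S_def using in_cluster.root by blast
  then have "marks_bounded \<omega> \<Longrightarrow> t < Sup S \<longleftrightarrow> (\<exists>x\<in>S. t < x)"
    by (intro less_cSup_iff) (auto simp: S_def bdd_above_cluster_marks_iff)
  then show ?thesis
    unfolding cluster_max_def S_def[symmetric]
    using Sup_real_unbounded[of S] bdd_above_cluster_marks_iff[of \<omega>]
    by (auto simp: S_def)
qed

lemma max_exceedance_sets [measurable]: "max_exceedance t \<in> sets M"
  unfolding max_exceedance_def less_cluster_max_iff by measurable

lemma emeasure_max_exceedance: "emeasure M (max_exceedance t) = emeasure M (\<Union>v. exceedance t v)"
proof (rule emeasure_eq_AE)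
  show "AE \<omega> in M. \<omega> \<in> max_exceedance t \<longleftrightarrow> \<omega> \<in> (\<Union>v. exceedance t v)"
    using AE_finite_cluster
  proof (rule AE_mp, intro AE_I2 impI)
    fix \<omega> assume "\<omega> \<in> space M" and "finite {v. in_cluster (\<lambda>u. N u \<omega>) v}"
    then have "marks_bounded \<omega>"
      by (simp flip: bdd_above_cluster_marks_iff add: Setcompr_eq_image)
    with \<open>\<omega> \<in> space M\<close> show "\<omega> \<in> max_exceedance t \<longleftrightarrow> \<omega> \<in> (\<Union>v. exceedance t v)"
      by (auto simp: max_exceedance_def exceedance_def less_cluster_max_iff)
  qed
qed auto

lemma measure_max_exceedance_le: "measure M (max_exceedance t) \<le> mean_cluster_size * mark_tail t"
proof -
  have "emeasure M (max_exceedance t) \<le> (\<integral>\<^sup>+v. emeasure M (exceedance t v) \<partial>count_space UNIV)"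
    unfolding emeasure_max_exceedance by (rule emeasure_UN_countable_le) auto
  also have "\<dots> = (\<integral>\<^sup>+v. ennreal (word_weight offspring_tail v) * ennreal (mark_tail t) \<partial>count_space UNIV)"
    by (simp add: emeasure_exceedance ennreal_mult word_weight_nonneg offspring_tail_nonneg mark_tail_nonneg)
  also have "\<dots> = ennreal (mean_cluster_size * mark_tail t)"
    using mean_cluster_size_ge_1
    by (simp add: nn_integral_multc nn_integral_word_weight_offspring_tail ennreal_mult')
  finally show ?thesis
    using mean_cluster_size_ge_1 mark_tail_nonneg by (simp add: emeasure_eq_measure)
qed

lemma emeasure_le_prod_pairs:
  assumes "finite J" "\<And>j. j \<in> J \<Longrightarrow> C j \<in> sets (Q \<Otimes>\<^sub>M count_space UNIV)"
    and "X \<subseteq> {\<omega>\<in>space M. \<forall>j\<in>J. (A j \<omega>, N j \<omega>) \<in> C j}"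
  shows "emeasure M X \<le> (\<Prod>j\<in>J. emeasure M {\<omega>\<in>space M. (A j \<omega>, N j \<omega>) \<in> C j})"
  using emeasure_mono[OF assms(3) pairs_event_sets[OF assms(1,2)]] emeasure_pairs_indep[OF assms(1,2)]
  by simp

lemma emeasure_exceedance_pair_le:
  assumes "v \<noteq> w" "w \<notin> descendants v"
  shows "emeasure M (exceedance t v \<inter> exceedance t w)
       \<le> ennreal (mark_tail t * mark_tail t * word_weight offspring_tail w)"
proof -
  have v: "v \<notin> insert w (ancestors w)"
    using assms ancestor_decomp[of v w] by (auto simp: descendants_def)
  define C where "C j = (if j = v \<or> j = w then {a\<in>space Q. t < f a} \<times> UNIV
    else space Q \<times> {n. w ! length j < n})" for j
  have C_ancestor: "C j = space Q \<times> {n. w ! length j < n}" if "j \<in> ancestors w" for j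
    using that v by (auto simp: C_def)
  have "emeasure M (exceedance t v \<inter> exceedance t w)
      \<le> (\<Prod>j\<in>insert v (insert w (ancestors w)). emeasure M {\<omega>\<in>space M. (A j \<omega>, N j \<omega>) \<in> C j})"
    by (rule emeasure_le_prod_pairs)
       (auto simp: C_def exceedance_def in_cluster_iff_ancestors measurable_space[OF A_measurable])
  also have "\<dots> = emeasure M {\<omega>\<in>space M. (A v \<omega>, N v \<omega>) \<in> C v}
      * (emeasure M {\<omega>\<in>space M. (A w \<omega>, N w \<omega>) \<in> C w}
      * (\<Prod>j\<in>ancestors w. emeasure M {\<omega>\<in>space M. (A j \<omega>, N j \<omega>) \<in> C j}))"
    using v by simp
  also have "(\<Prod>j\<in>ancestors w. emeasure M {\<omega>\<in>space M. (A j \<omega>, N j \<omega>) \<in> C j})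
      = (\<Prod>j\<in>ancestors w. ennreal (offspring_tail (w ! length j)))"
    by (intro prod.cong refl) (simp add: C_ancestor emeasure_offspring_tail)
  finally show ?thesis
    using emeasure_mark_tail[of v t] emeasure_mark_tail[of w t]
    by (simp add: C_def prod_ancestors_offspring_tail ennreal_mult mark_tail_nonneg
        word_weight_nonneg offspring_tail_nonneg mult.assoc)
qed

lemma emeasure_exceedance_descendant_le:
  "emeasure M (exceedance t v \<inter> exceedance t (v @ i # u))
     \<le> ennreal (joint_tail t i * mark_tail t * word_weight offspring_tail u)"
proof -
  define w where "w = v @ i # u"
  define P where "P = (\<lambda>j. v @ i # j) ` ancestors u"
  have vw: "v \<notin> insert w P" "w \<notin> P"
    by (auto simp: w_def P_def in_ancestors_iff)
  have P_ancestors: "P \<subseteq> ancestors w"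
    by (auto simp: P_def w_def ancestors_append_Cons)
  define C where "C j = (if j = v then {a\<in>space Q. t < f a} \<times> {n. i < n}
    else if j = w then {a\<in>space Q. t < f a} \<times> UNIV
    else space Q \<times> {n. w ! length j < n})" for j
  have "exceedance t v \<inter> exceedance t w \<subseteq> {\<omega>\<in>space M. \<forall>j\<in>insert v (insert w P). (A j \<omega>, N j \<omega>) \<in> C j}"
  proof (rule subsetI)
    fix \<omega> assume \<omega>: "\<omega> \<in> exceedance t v \<inter> exceedance t w"
    then have "\<forall>j\<in>ancestors w. w ! length j < N j \<omega>"
      by (simp add: exceedance_def in_cluster_iff_ancestors)
    moreover have "v \<in> ancestors w" "w ! length v = i"
      by (simp_all add: w_def ancestors_append_Cons)
    ultimately show "\<omega> \<in> {\<omega>\<in>space M. \<forall>j\<in>insert v (insert w P). (A j \<omega>, N j \<omega>) \<in> C j}"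
      using \<omega> vw P_ancestors by (auto simp: C_def exceedance_def measurable_space[OF A_measurable])
  qed
  then have "emeasure M (exceedance t v \<inter> exceedance t w)
      \<le> (\<Prod>j\<in>insert v (insert w P). emeasure M {\<omega>\<in>space M. (A j \<omega>, N j \<omega>) \<in> C j})"
    by (intro emeasure_le_prod_pairs) (auto simp: C_def P_def)
  also have "\<dots> = emeasure M {\<omega>\<in>space M. (A v \<omega>, N v \<omega>) \<in> C v}
      * (emeasure M {\<omega>\<in>space M. (A w \<omega>, N w \<omega>) \<in> C w}
      * (\<Prod>j\<in>P. emeasure M {\<omega>\<in>space M. (A j \<omega>, N j \<omega>) \<in> C j}))"
    using vw by (simp add: P_def)
  also have "(\<Prod>j\<in>P. emeasure M {\<omega>\<in>space M. (A j \<omega>, N j \<omega>) \<in> C j})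
      = (\<Prod>j\<in>P. ennreal (offspring_tail (w ! length j)))"
    using vw by (intro prod.cong refl) (auto simp: C_def emeasure_offspring_tail)
  also have "(\<Prod>j\<in>P. ennreal (offspring_tail (w ! length j))) = ennreal (word_weight offspring_tail u)"
    unfolding P_def prod_ancestors_offspring_tail[symmetric]
    by (subst prod.reindex) (auto simp: inj_on_def w_def nth_append)
  finally show ?thesis
    using emeasure_joint_tail[of v t i] emeasure_mark_tail[of w t] vw
    by (simp add: C_def eq_commute[of w v] ennreal_mult joint_tail_nonneg mark_tail_nonneg word_weight_nonneg
        offspring_tail_nonneg mult.assoc flip: w_def)
qed

definition joint_tail_mean :: "real \<Rightarrow> real" where
  "joint_tail_mean t = (\<Sum>i. joint_tail t i)"

lemma joint_tail_le_mark_tail: "joint_tail t i \<le> mark_tail t"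
proof -
  have "joint_tail t i \<le> prob {\<omega>\<in>space M. A [] \<omega> \<in> space Q \<and> t < f (A [] \<omega>)}"
    unfolding joint_tail_def by (intro finite_measure_mono) (auto simp: measurable_space[OF A_measurable])
  also have "\<dots> = mark_tail t"
    using emeasure_mark_tail[of "[]" t] by (simp add: emeasure_eq_measure mark_tail_nonneg)
  finally show ?thesis .
qed

lemma joint_tail_summable: "summable (joint_tail t)"
  by (rule summable_comparison_test'[OF offspring_tail_summable, of 0])
     (simp add: joint_tail_nonneg joint_tail_le_offspring_tail)

lemma joint_tail_mean_nonneg: "0 \<le> joint_tail_mean t"
  unfolding joint_tail_mean_def by (rule suminf_nonneg[OF joint_tail_summable joint_tail_nonneg])

lemma joint_tail_mean_le: "joint_tail_mean t \<le> real K * mark_tail t + (\<Sum>i. offspring_tail (i + K))"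
proof -
  have "joint_tail_mean t = (\<Sum>i. joint_tail t (i + K)) + (\<Sum>i<K. joint_tail t i)"
    unfolding joint_tail_mean_def by (rule suminf_split_initial_segment[OF joint_tail_summable])
  also have "(\<Sum>i. joint_tail t (i + K)) \<le> (\<Sum>i. offspring_tail (i + K))"
    by (intro suminf_le joint_tail_le_offspring_tail summable_ignore_initial_segment
        joint_tail_summable offspring_tail_summable)
  also have "(\<Sum>i<K. joint_tail t i) \<le> (\<Sum>i<K. mark_tail t)"
    by (intro sum_mono joint_tail_le_mark_tail)
  finally show ?thesis
    by simp
qed

lemma joint_tail_mean_small:
  assumes "0 < \<epsilon>"
  obtains \<delta> where "0 < \<delta>" "\<And>t. mark_tail t < \<delta> \<Longrightarrow> mark_tail t + joint_tail_mean t \<le> \<epsilon>"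
proof -
  have "(\<lambda>K. \<Sum>i. offspring_tail (i + K)) \<longlonglongrightarrow> 0"
    by (rule suminf_exist_split2[OF offspring_tail_summable])
  then have "eventually (\<lambda>K. (\<Sum>i. offspring_tail (i + K)) < \<epsilon> / 2) sequentially"
    using assms by (intro order_tendstoD(2)) auto
  then obtain K where K: "(\<Sum>i. offspring_tail (i + K)) < \<epsilon> / 2"
    by (auto simp: eventually_sequentially)
  show thesis
  proof
    show "0 < \<epsilon> / 2 / (real K + 1)"
      using assms by simp
    fix t assume t: "mark_tail t < \<epsilon> / 2 / (real K + 1)"
    have "mark_tail t + joint_tail_mean t \<le> (real K + 1) * mark_tail t + \<epsilon> / 2"
      using joint_tail_mean_le[of t K] K by (simp add: algebra_simps)
    also have "(real K + 1) * mark_tail t \<le> \<epsilon> / 2"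
      using t by (simp add: field_simps)
    finally show "mark_tail t + joint_tail_mean t \<le> \<epsilon>"
      by simp
  qed
qed

text \<open>For \<open>w\<close> not below \<open>v\<close>, forgetting that \<open>v\<close> is in the cluster leaves independent
  events; for \<open>w = v @ i # u\<close> the two exceedances are linked only through \<open>N v > i\<close>.\<close>
lemma nn_integral_exceedance_pairs_le:
  "(\<integral>\<^sup>+w. emeasure M (exceedance t v \<inter> exceedance t w) \<partial>count_space (- {v}))
     \<le> ennreal (mean_cluster_size * mark_tail t * (mark_tail t + joint_tail_mean t))"
proof -
  let ?T = "mark_tail t" and ?W = "word_weight offspring_tail"
  define D where "D w = ennreal (joint_tail t (w ! length v) * ?T * ?W (drop (Suc (length v)) w))" for w
  have "emeasure M (exceedance t v \<inter> exceedance t w) * indicator (- {v}) w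
      \<le> ennreal (?T * ?T * ?W w) + D w * indicator (descendants v) w" for w
  proof (cases "w = v \<or> w \<notin> descendants v")
    case True
    then show ?thesis
      using emeasure_exceedance_pair_le[of v w t] by (auto simp: indicator_def)
  next
    case False
    then obtain i u where "w = v @ i # u"
      by (auto simp: descendants_def)
    then show ?thesis
      using emeasure_exceedance_descendant_le[of t v i u] False
      by (auto simp: D_def indicator_def intro: order.trans add_increasing)
  qed
  then have "(\<integral>\<^sup>+w. emeasure M (exceedance t v \<inter> exceedance t w) \<partial>count_space (- {v}))
      \<le> (\<integral>\<^sup>+w. ennreal (?T * ?T) * ennreal (?W w) + D w * indicator (descendants v) w \<partial>count_space UNIV)"
    by (auto simp: nn_integral_count_space_indicator ennreal_mult mark_tail_nonneg word_weight_nonneg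
        offspring_tail_nonneg intro!: nn_integral_mono)
  also have "\<dots> = ennreal (?T * ?T) * ennreal mean_cluster_size
      + (\<integral>\<^sup>+i. \<integral>\<^sup>+u. D (v @ i # u) \<partial>count_space UNIV \<partial>count_space UNIV)"
    by (simp add: nn_integral_add nn_integral_cmult nn_integral_word_weight_offspring_tail nn_integral_descendants)
  also have "(\<integral>\<^sup>+i. \<integral>\<^sup>+u. D (v @ i # u) \<partial>count_space UNIV \<partial>count_space UNIV)
      = (\<integral>\<^sup>+i. ennreal (joint_tail t i) * (ennreal ?T * ennreal mean_cluster_size) \<partial>count_space UNIV)"
    by (simp add: D_def nn_integral_cmult nn_integral_word_weight_offspring_tail ennreal_mult
        joint_tail_nonneg mark_tail_nonneg word_weight_nonneg offspring_tail_nonneg mult.assoc)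
  also have "(\<integral>\<^sup>+i. ennreal (joint_tail t i) * (ennreal ?T * ennreal mean_cluster_size) \<partial>count_space UNIV)
      = ennreal (joint_tail_mean t) * (ennreal ?T * ennreal mean_cluster_size)"
    by (simp add: nn_integral_multc nn_integral_count_space_nat joint_tail_mean_def
        suminf_ennreal2[OF joint_tail_nonneg joint_tail_summable])
  also have "ennreal (?T * ?T) * ennreal mean_cluster_size
      + ennreal (joint_tail_mean t) * (ennreal ?T * ennreal mean_cluster_size)
      = ennreal (mean_cluster_size * ?T * (?T + joint_tail_mean t))"
    using mean_cluster_size_ge_1 mark_tail_nonneg[of t] joint_tail_mean_nonneg[of t]
    by (simp add: ennreal_mult'[symmetric] ennreal_plus[symmetric] algebra_simps del: ennreal_plus)
  finally show ?thesis .
qed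

definition overlap :: "real \<Rightarrow> nat list \<Rightarrow> 'w set" where
  "overlap t v = (\<Union>w\<in>- {v}. exceedance t v \<inter> exceedance t w)"

lemma overlap_sets [measurable]: "overlap t v \<in> sets M"
  unfolding overlap_def by (intro sets.countable_UN'') auto

lemma emeasure_overlap_le:
  "emeasure M (overlap t v) \<le> ennreal (mean_cluster_size * mark_tail t * (mark_tail t + joint_tail_mean t))"
  unfolding overlap_def
  by (rule order.trans[OF emeasure_UN_countable_le nn_integral_exceedance_pairs_le]) auto

lemma nn_integral_exceedance_minus_overlap_le:
  "(\<integral>\<^sup>+v. emeasure M (exceedance t v - overlap t v) \<partial>count_space UNIV) \<le> emeasure M (max_exceedance t)"
proof -
  have "disjoint_family (\<lambda>v. exceedance t v - overlap t v)"
    by (auto simp: disjoint_family_on_def overlap_def)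
  then have "(\<integral>\<^sup>+v. emeasure M (exceedance t v - overlap t v) \<partial>count_space UNIV)
      = emeasure M (\<Union>v. exceedance t v - overlap t v)"
    using emeasure_UN_countable[of UNIV "\<lambda>v. exceedance t v - overlap t v" M] by auto
  also have "\<dots> \<le> emeasure M (max_exceedance t)"
    unfolding emeasure_max_exceedance by (intro emeasure_mono) auto
  finally show ?thesis .
qed

text \<open>Inclusion--exclusion of first order: the overlap of \<open>exceedance t v\<close> with the other
  exceedances is bounded by the pair estimate for \<open>v \<in> F\<close> and crudely by \<open>exceedance t v\<close>
  itself otherwise.\<close>
lemma emeasure_max_exceedance_ge:
  assumes F: "finite F"
  shows "ennreal (mean_cluster_size * mark_tail t)
    \<le> emeasure M (max_exceedance t)
      + ennreal (real (card F) * (mean_cluster_size * mark_tail t * (mark_tail t + joint_tail_mean t)))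
      + ennreal (mark_tail t) * (\<integral>\<^sup>+v. ennreal (word_weight offspring_tail v) * indicator (- F) v \<partial>count_space UNIV)"
proof -
  let ?E = "exceedance t" and ?W = "word_weight offspring_tail"
  define X where "X = mean_cluster_size * mark_tail t * (mark_tail t + joint_tail_mean t)"
  have X: "0 \<le> X"
    unfolding X_def using mean_cluster_size_ge_1 mark_tail_nonneg joint_tail_mean_nonneg by simp
  have pointwise: "emeasure M (?E v) \<le> emeasure M (?E v - overlap t v)
      + (ennreal X * indicator F v + ennreal (mark_tail t) * (ennreal (?W v) * indicator (- F) v))" for v
  proof -
    have "?E v = (?E v - overlap t v) \<union> overlap t v"
      by (auto simp: overlap_def)
    then have "emeasure M (?E v) \<le> emeasure M (?E v - overlap t v) + emeasure M (overlap t v)"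
      by (metis emeasure_subadditive sets.Diff exceedance_sets overlap_sets)
    moreover have "emeasure M (overlap t v) \<le> emeasure M (?E v)"
      by (intro emeasure_mono) (auto simp: overlap_def)
    ultimately show ?thesis
      using emeasure_overlap_le[of t v]
      by (cases "v \<in> F")
         (auto simp: X_def emeasure_exceedance ennreal_mult' mark_tail_nonneg mult.commute
           intro: order.trans add_left_mono)
  qed
  have "ennreal (mean_cluster_size * mark_tail t) = (\<integral>\<^sup>+v. emeasure M (?E v) \<partial>count_space UNIV)"
    using mean_cluster_size_ge_1
    by (simp add: emeasure_exceedance ennreal_mult mark_tail_nonneg word_weight_nonneg offspring_tail_nonneg
        nn_integral_multc nn_integral_word_weight_offspring_tail)
  also have "\<dots> \<le> (\<integral>\<^sup>+v. emeasure M (?E v - overlap t v)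
      + (ennreal X * indicator F v + ennreal (mark_tail t) * (ennreal (?W v) * indicator (- F) v)) \<partial>count_space UNIV)"
    by (intro nn_integral_mono pointwise)
  also have "\<dots> = (\<integral>\<^sup>+v. emeasure M (?E v - overlap t v) \<partial>count_space UNIV) + (ennreal (real (card F) * X)
      + ennreal (mark_tail t) * (\<integral>\<^sup>+v. ennreal (?W v) * indicator (- F) v \<partial>count_space UNIV))"
    using F X by (simp add: nn_integral_add nn_integral_cmult nn_integral_cmult_indicator ennreal_mult'
        ennreal_of_nat_eq_real_of_nat mult.commute)
  also have "\<dots> \<le> emeasure M (max_exceedance t) + (ennreal (real (card F) * X)
      + ennreal (mark_tail t) * (\<integral>\<^sup>+v. ennreal (?W v) * indicator (- F) v \<partial>count_space UNIV))"
    by (intro add_right_mono nn_integral_exceedance_minus_overlap_le)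
  finally show ?thesis
    unfolding X_def by (simp add: add.assoc)
qed

lemma measure_max_exceedance_ge:
  assumes e: "0 < e"
  shows "\<exists>\<delta>>0. \<forall>t. mark_tail t < \<delta> \<longrightarrow> (mean_cluster_size - e) * mark_tail t \<le> measure M (max_exceedance t)"
proof -
  let ?c = mean_cluster_size
  let ?tail = "\<lambda>F. \<integral>\<^sup>+v. ennreal (word_weight offspring_tail v) * indicator (- F) v \<partial>count_space UNIV"
  obtain F where F: "finite F" "?tail F < ennreal (e / 2)"
    using nn_integral_count_space_tail_small[of "\<lambda>v. ennreal (word_weight offspring_tail v)" "e / 2"] e
    by (auto simp: nn_integral_word_weight_offspring_tail)
  have c: "1 \<le> ?c"
    by (rule mean_cluster_size_ge_1)
  obtain \<delta> where \<delta>: "0 < \<delta>"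
    and small: "\<And>t. mark_tail t < \<delta> \<Longrightarrow> mark_tail t + joint_tail_mean t \<le> e / (2 * (real (card F) + 1) * ?c)"
    using joint_tail_mean_small[of "e / (2 * (real (card F) + 1) * ?c)"] e c by auto
  show ?thesis
  proof (intro exI[of _ \<delta>] conjI allI impI \<delta>)
    fix t assume t: "mark_tail t < \<delta>"
    let ?T = "mark_tail t" and ?P = "measure M (max_exceedance t)"
    have T: "0 \<le> ?T"
      by (rule mark_tail_nonneg)
    have "real (card F) * (?c * ?T * (?T + joint_tail_mean t)) = ?T * (real (card F) * ?c * (?T + joint_tail_mean t))"
      by (simp add: algebra_simps)
    also have "\<dots> \<le> ?T * (real (card F) * ?c * (e / (2 * (real (card F) + 1) * ?c)))"
      using small[OF t] T c by (intro mult_left_mono) auto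
    also have "real (card F) * ?c * (e / (2 * (real (card F) + 1) * ?c)) = e / 2 * (real (card F) / (real (card F) + 1))"
      using c by (simp add: divide_simps)
    also have "?T * \<dots> \<le> ?T * (e / 2)"
      using T e by (intro mult_left_mono mult_left_le) auto
    finally have pairs: "real (card F) * (?c * ?T * (?T + joint_tail_mean t)) \<le> ?T * (e / 2)" .
    have tail: "ennreal ?T * ?tail F \<le> ennreal (?T * (e / 2))"
      using mult_left_mono[OF less_imp_le[OF F(2)], of "ennreal ?T"] ennreal_mult[of ?T "e / 2"] T e by simp
    have "ennreal (?c * ?T) \<le> ennreal ?P + ennreal (?T * (e / 2)) + ennreal (?T * (e / 2))"
      using emeasure_max_exceedance_ge[OF F(1), of t] unfolding emeasure_eq_measure
      by (rule order.trans) (intro add_mono order.refl ennreal_leI pairs tail)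
    also have "\<dots> = ennreal (?P + ?T * e)"
      using T e by (simp add: ennreal_plus[symmetric] del: ennreal_plus)
    finally show "(?c - e) * ?T \<le> ?P"
      using T e by (subst (asm) ennreal_le_iff) (auto simp: algebra_simps)
  qed
qed

end

theorem mainTheorem6:
  fixes Q :: "'s::polish_space measure"
    and f :: "'s \<Rightarrow> real"
    and h :: "real \<Rightarrow> 's \<Rightarrow> real"
    and G :: "real \<Rightarrow> real"
    and M :: "'w measure"
    and A :: "nat list \<Rightarrow> 'w \<Rightarrow> 's"
    and N :: "nat list \<Rightarrow> 'w \<Rightarrow> nat"
  assumes Q_prob: "prob_space Q"
    and Q_borel: "sets Q = sets borel"
    and f_meas: "f \<in> borel_measurable Q"
    and f_nonneg: "\<And>a. f a \<ge> 0"
    and h_meas: "(\<lambda>(s, a). h s a) \<in> borel_measurable (borel \<Otimes>\<^sub>M Q)"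
    and h_nonneg: "\<And>s a. h s a \<ge> 0"
    and kappa_lt_1: "(\<integral>\<^sup>+ a. hawkes_kappa h a \<partial>Q) < 1"
    and G_evd: "extreme_value_df G"
    and M_prob: "prob_space M"
    and indep: "prob_space.indep_vars M (\<lambda>_. Q \<Otimes>\<^sub>M count_space UNIV)
                  (\<lambda>v \<omega>. (A v \<omega>, N v \<omega>)) UNIV"
    and law: "\<And>v B k. B \<in> sets Q \<Longrightarrow>
                measure M {\<omega> \<in> space M. A v \<omega> \<in> B \<and> N v \<omega> = k}
                = (\<integral>a\<in>B. poisson_prob (enn2real (hawkes_kappa h a)) k \<partial>Q)"
    and X_MDA: "in_MDA G (\<lambda>t. measure Q {a \<in> space Q. f a > t})"
  shows "in_MDA G (\<lambda>t. measure M {\<omega> \<in> space M.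
                        cluster_max f (\<lambda>v. A v \<omega>) (\<lambda>v. N v \<omega>) > t})"
proof -
  interpret hawkes_cluster Q f h M A N
    by (rule hawkes_cluster.intro[OF Q_prob f_meas h_meas kappa_lt_1 M_prob indep law])
  show ?thesis
  proof (rule in_MDA_tail_equivalent[OF G_evd X_MDA])
    show "0 < mean_cluster_size"
      using mean_cluster_size_ge_1 by simp
    show "0 \<le> measure Q {a \<in> space Q. f a > t}" for t
      by simp
    show "measure M {\<omega> \<in> space M. cluster_max f (\<lambda>v. A v \<omega>) (\<lambda>v. N v \<omega>) > t}
        \<le> mean_cluster_size * measure Q {a \<in> space Q. f a > t}" for t
      using measure_max_exceedance_le[of t] unfolding max_exceedance_def mark_tail_def .
    show "\<exists>\<delta>>0. \<forall>t. measure Q {a \<in> space Q. f a > t} < \<delta> \<longrightarrow>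
        (mean_cluster_size - e) * measure Q {a \<in> space Q. f a > t}
        \<le> measure M {\<omega> \<in> space M. cluster_max f (\<lambda>v. A v \<omega>) (\<lambda>v. N v \<omega>) > t}" if e: "0 < e" for e
      using measure_max_exceedance_ge[OF e] unfolding max_exceedance_def mark_tail_def .
  qed
qed

end
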